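(* Let $N=\{1,\ldots,n\}$ be a finite player set and let $\Gamma=(A,u)$ be a normal form game on $N$, where each $A_i\subseteq\mathbb{R}^{k_i}$ is compact, $A=A_1\times\cdots\times A_n$, and each $u_i\colon A\to\mathbb{R}$ is continuous. Suppose $\Gamma$ is separable, i.e. there are functions $h^i_j\colon A_j\to\mathbb{R}$ ($i,j\in N$) with $u_i(a)=\sum_{j\in N}h^i_j(a_j)$ for all $a\in A$ and $i\in N$, and let $B_j=\arg\max_{b_j\in A_j}h^j_j(b_j)\subseteq A_j$ be player $j$'s (constant) set of best responses. Suppose $\Gamma$ admits a socially optimal Nash equilibrium, i.e. a Nash equilibrium $a^\star\in A$ with $\sum_{i\in N}u_i(a^\star)=\bar v^\lambda(N)=\max_{a\in A}\sum_{i\in N}u_i(a)$. If for all coalitions $S\subseteq N$ and all players $j\in N$ $$\max_{a_j\in A_j}\sum_{i\in S}h^i_j(a_j)=\sum_{i\in S}\max_{a_j\in A_j}h^i_j(a_j)\quad\text{and}\quad \max_{a_j\in B_j}\sum_{i\in S}h^i_j(a_j)=\sum_{i\in S}\max_{a_j\in B_j}h^i_j(a_j),$$ then the generalised $\lambda$-Core of $\Gamma$ is non-empty: $\widehat{\mathcal{C}}^\lambda(\Gamma)\neq\varnothing$.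
   Context: Notation: for $S\subseteq N$, $A_S=\prod_{i\in S}A_i$, $A_{-S}=A_{N\setminus S}$, and a profile is written $a=(a_S,a_{-S})$. A Nash equilibrium is $a^*\in A$ with $u_i(a^* )\ge u_i(b_i,a^*_{-i})$ for all $i$ and $b_i\in A_i$. For a nonempty coalition $S\subsetneq N$ and a coalitional strategy $a_S\in A_S$, the reduced game has player set $N\setminus S$, strategy set $A_{-S}$, and payoffs $b_{-S}\mapsto u_j(a_S,b_{-S})$ for $j\in N\setminus S$; let $\mathsf{E}(S,a_S)\subseteq A_{-S}$ be its set of Nash equilibria. The generalised $\lambda$-characteristic function is $\bar v^\lambda(\varnothing)=0$, $\bar v^\lambda(N)=\max_{a\in A}\sum_{i\in N}u_i(a)$, and for $\varnothing\neq S\subsetneq N$, $$\bar v^\lambda(S)=\max_{a_S\in A_S}\ \max_{b_{-S}\in\mathsf{E}(S,a_S)}\sum_{i\in S}u_i(a_S,b_{-S}),$$ with value $-\infty$ when the relevant equilibrium set is empty. For a characteristic function $v$, its Core is $\mathcal{C}(v)=\{x\in\mathbb{R}^N:\sum_{i\in N}x_i=v(N),\ \sum_{i\in S}x_i\ge v(S)\text{ for all }S\subseteq N\}$. The generalised $\lambda$-Core of $\Gamma$ is $\widehat{\mathcal{C}}^\lambda(\Gamma)=\{a\in A: (u_1(a),\ldots,u_n(a))\in\mathcal{C}(\bar v^\lambda)\}$. *)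

theory Defs
  imports "HOL-Analysis.Analysis"
begin

text \<open>Players are natural numbers in a finite set N; a strategy profile is an
extensional function in PiE N A (product topology on nat => 'a).\<close>

definition merge_prof :: "nat set \<Rightarrow> (nat \<Rightarrow> 'a) \<Rightarrow> (nat \<Rightarrow> 'a) \<Rightarrow> (nat \<Rightarrow> 'a)" where
  "merge_prof S aS b = (\<lambda>i. if i \<in> S then aS i else b i)"

definition is_nash :: "nat set \<Rightarrow> (nat \<Rightarrow> 'a set) \<Rightarrow> (nat \<Rightarrow> (nat \<Rightarrow> 'a) \<Rightarrow> real) \<Rightarrow> (nat \<Rightarrow> 'a) \<Rightarrow> bool" where
  "is_nash N A u a \<longleftrightarrow> a \<in> (\<Pi>\<^sub>E i\<in>N. A i) \<and>
     (\<forall>i\<in>N. \<forall>b\<in>A i. u i (a(i := b)) \<le> u i a)"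

text \<open>Nash equilibria E(S, aS) of the reduced game: players N - S, payoffs
b \<mapsto> u j (aS, b).\<close>
definition reduced_eq :: "nat set \<Rightarrow> (nat \<Rightarrow> 'a set) \<Rightarrow> (nat \<Rightarrow> (nat \<Rightarrow> 'a) \<Rightarrow> real)
    \<Rightarrow> nat set \<Rightarrow> (nat \<Rightarrow> 'a) \<Rightarrow> (nat \<Rightarrow> 'a) set" where
  "reduced_eq N A u S aS = {b \<in> (\<Pi>\<^sub>E i\<in>N - S. A i).
     \<forall>j\<in>N - S. \<forall>c\<in>A j. u j ((merge_prof S aS b)(j := c)) \<le> u j (merge_prof S aS b)}"

text \<open>Generalised lambda-characteristic function, valued in extended reals
(Sup of the empty set is -\<infinity>).\<close>
definition vbar :: "nat set \<Rightarrow> (nat \<Rightarrow> 'a set) \<Rightarrow> (nat \<Rightarrow> (nat \<Rightarrow> 'a) \<Rightarrow> real) \<Rightarrow> nat set \<Rightarrow> ereal" where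
  "vbar N A u S =
    (if S = {} then 0
     else if S = N then (SUP a\<in>(\<Pi>\<^sub>E i\<in>N. A i). ereal (\<Sum>i\<in>N. u i a))
     else (SUP aS\<in>(\<Pi>\<^sub>E i\<in>S. A i). SUP b\<in>reduced_eq N A u S aS.
             ereal (\<Sum>i\<in>S. u i (merge_prof S aS b))))"

definition core :: "nat set \<Rightarrow> (nat set \<Rightarrow> ereal) \<Rightarrow> (nat \<Rightarrow> real) set" where
  "core N v = {x. ereal (\<Sum>i\<in>N. x i) = v N \<and> (\<forall>S. S \<subseteq> N \<longrightarrow> ereal (\<Sum>i\<in>S. x i) \<ge> v S)}"

definition lambda_core :: "nat set \<Rightarrow> (nat \<Rightarrow> 'a set) \<Rightarrow> (nat \<Rightarrow> (nat \<Rightarrow> 'a) \<Rightarrow> real) \<Rightarrow> (nat \<Rightarrow> 'a) set" where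
  "lambda_core N A u = {a \<in> (\<Pi>\<^sub>E i\<in>N. A i). (\<lambda>i. u i a) \<in> core N (vbar N A u)}"

end

theory Submission
  imports Defs
begin

text \<open>A socially optimal profile \<open>a\<close> maximises total welfare, and by separability the
welfare splits into independent terms \<open>\<Sum>\<^sub>i h\<^sup>i\<^sub>j(a\<^sub>j)\<close>, one for each player \<open>j\<close>; so \<open>a\<^sub>j\<close>
maximises \<open>\<Sum>\<^sub>i h\<^sup>i\<^sub>j\<close> over \<open>A\<^sub>j\<close>. Since the maximum of this sum is the sum of the maxima,
\<open>a\<^sub>j\<close> maximises every \<open>h\<^sup>i\<^sub>j\<close> at once. Hence every player receives at \<open>a\<close> the largest
payoff attainable anywhere in the game, and no coalition can guarantee itself more
than it gets at \<open>a\<close>: the payoff vector of \<open>a\<close> lies in the Core. Only social optimality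
of \<open>a\<close> and the first interchange condition (for \<open>S = N\<close>) are needed; compactness and
continuity only make each \<open>h\<^sup>i\<^sub>j\<close> bounded above, so that the real suprema in that
condition are not junk values.\<close>

lemma maximizer_of_sum_maximizes_summands:
  fixes f :: "'i \<Rightarrow> 'b \<Rightarrow> real"
  assumes "finite I" and "c \<in> C"
    and bdd: "\<And>i. i \<in> I \<Longrightarrow> bdd_above (f i ` C)"
    and max_sum: "\<And>x. x \<in> C \<Longrightarrow> (\<Sum>i\<in>I. f i x) \<le> (\<Sum>i\<in>I. f i c)"
    and SUP_sum: "(SUP x\<in>C. \<Sum>i\<in>I. f i x) = (\<Sum>i\<in>I. SUP x\<in>C. f i x)"
    and "i \<in> I" "x \<in> C"
  shows "f i x \<le> f i c"
proof -
  have c_below_SUP: "f k c \<le> (SUP x\<in>C. f k x)" if "k \<in> I" for k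
    using cSUP_upper[OF \<open>c \<in> C\<close> bdd[OF that]] .
  have "(\<Sum>k\<in>I. f k c) = (SUP x\<in>C. \<Sum>k\<in>I. f k x)"
    using \<open>c \<in> C\<close> max_sum by (intro cSup_eq_maximum[symmetric]) auto
  then have "(\<Sum>k\<in>I. (SUP x\<in>C. f k x) - f k c) = 0"
    using SUP_sum by (simp add: sum_subtractf)
  then have "\<forall>k\<in>I. (SUP x\<in>C. f k x) - f k c = 0"
    using c_below_SUP by (subst (asm) sum_nonneg_eq_0_iff[OF \<open>finite I\<close>]) auto
  then have "(SUP x\<in>C. f i x) = f i c"
    using \<open>i \<in> I\<close> by simp
  with cSUP_upper[OF \<open>x \<in> C\<close> bdd[OF \<open>i \<in> I\<close>]] show ?thesis
    by simp
qed

lemma sum_fun_upd_split: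
  assumes "finite N" "j \<in> N"
  shows "(\<Sum>k\<in>N. g k ((a(j := c)) k)) = g j c + (\<Sum>k\<in>N - {j}. g k (a k))"
proof -
  have "(\<Sum>k\<in>N. g k ((a(j := c)) k)) = g j c + (\<Sum>k\<in>N - {j}. g k ((a(j := c)) k))"
    using assms by (simp add: sum.remove)
  also have "(\<Sum>k\<in>N - {j}. g k ((a(j := c)) k)) = (\<Sum>k\<in>N - {j}. g k (a k))"
    by (rule sum.cong) auto
  finally show ?thesis .
qed

lemma fun_upd_in_PiE_same:
  "a \<in> (\<Pi>\<^sub>E k\<in>N. A k) \<Longrightarrow> j \<in> N \<Longrightarrow> c \<in> A j \<Longrightarrow> a(j := c) \<in> (\<Pi>\<^sub>E k\<in>N. A k)"
  using PiE_fun_upd[of c A j a N] by (simp add: insert_absorb)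

lemma merge_prof_in_PiE:
  assumes "S \<subseteq> N" "aS \<in> (\<Pi>\<^sub>E i\<in>S. A i)" "b \<in> (\<Pi>\<^sub>E i\<in>N - S. A i)"
  shows "merge_prof S aS b \<in> (\<Pi>\<^sub>E i\<in>N. A i)"
  using assms unfolding merge_prof_def by (auto simp: PiE_def extensional_def Pi_def)

lemma welfare_le_vbar_grand_coalition:
  assumes "ereal (\<Sum>i\<in>N. u i a) = vbar N A u N" "x \<in> (\<Pi>\<^sub>E i\<in>N. A i)"
  shows "(\<Sum>i\<in>N. u i x) \<le> (\<Sum>i\<in>N. u i a)"
proof (cases "N = {}")
  case False
  have "ereal (\<Sum>i\<in>N. u i x) \<le> (SUP y\<in>(\<Pi>\<^sub>E i\<in>N. A i). ereal (\<Sum>i\<in>N. u i y))"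
    using assms(2) by (rule SUP_upper)
  also have "\<dots> = ereal (\<Sum>i\<in>N. u i a)"
    using assms(1) False unfolding vbar_def by simp
  finally show ?thesis by simp
qed simp

lemma lambda_core_memberI:
  assumes a: "a \<in> (\<Pi>\<^sub>E i\<in>N. A i)"
    and welfare: "ereal (\<Sum>i\<in>N. u i a) = vbar N A u N"
    and best: "\<And>i x. i \<in> N \<Longrightarrow> x \<in> (\<Pi>\<^sub>E k\<in>N. A k) \<Longrightarrow> u i x \<le> u i a"
  shows "a \<in> lambda_core N A u"
  unfolding lambda_core_def core_def
proof (intro CollectI conjI a welfare allI impI)
  fix S assume "S \<subseteq> N"
  have "(SUP aS\<in>(\<Pi>\<^sub>E i\<in>S. A i). SUP b\<in>reduced_eq N A u S aS.
          ereal (\<Sum>i\<in>S. u i (merge_prof S aS b))) \<le> ereal (\<Sum>i\<in>S. u i a)"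
  proof (intro SUP_least)
    fix aS b assume "aS \<in> (\<Pi>\<^sub>E i\<in>S. A i)" "b \<in> reduced_eq N A u S aS"
    then have "merge_prof S aS b \<in> (\<Pi>\<^sub>E k\<in>N. A k)"
      using \<open>S \<subseteq> N\<close> by (intro merge_prof_in_PiE) (auto simp: reduced_eq_def)
    then show "ereal (\<Sum>i\<in>S. u i (merge_prof S aS b)) \<le> ereal (\<Sum>i\<in>S. u i a)"
      using \<open>S \<subseteq> N\<close> best by (auto intro!: sum_mono)
  qed
  then show "vbar N A u S \<le> ereal (\<Sum>i\<in>S. u i a)"
    using welfare by (auto simp: vbar_def)
qed

lemma separable_welfare_maximizer_coordinatewise:
  fixes u :: "nat \<Rightarrow> (nat \<Rightarrow> 'a) \<Rightarrow> real" and h :: "nat \<Rightarrow> nat \<Rightarrow> 'a \<Rightarrow> real"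
  assumes "finite N"
    and separable: "\<forall>x\<in>(\<Pi>\<^sub>E k\<in>N. A k). \<forall>i\<in>N. u i x = (\<Sum>j\<in>N. h i j (x j))"
    and a: "a \<in> (\<Pi>\<^sub>E k\<in>N. A k)"
    and max_welfare: "\<And>x. x \<in> (\<Pi>\<^sub>E k\<in>N. A k) \<Longrightarrow> (\<Sum>i\<in>N. u i x) \<le> (\<Sum>i\<in>N. u i a)"
    and "j \<in> N" "c \<in> A j"
  shows "(\<Sum>i\<in>N. h i j c) \<le> (\<Sum>i\<in>N. h i j (a j))"
proof -
  define rest where "rest = (\<Sum>i\<in>N. \<Sum>k\<in>N - {j}. h i k (a k))"
  have welfare_upd: "(\<Sum>i\<in>N. u i (a(j := d))) = (\<Sum>i\<in>N. h i j d) + rest"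
    if "d \<in> A j" for d
  proof -
    have "(\<Sum>i\<in>N. u i (a(j := d))) = (\<Sum>i\<in>N. \<Sum>k\<in>N. h i k ((a(j := d)) k))"
      using separable fun_upd_in_PiE_same[OF a \<open>j \<in> N\<close> that] by simp
    also have "\<dots> = (\<Sum>i\<in>N. h i j d + (\<Sum>k\<in>N - {j}. h i k (a k)))"
      by (rule sum.cong[OF refl], rule sum_fun_upd_split[OF \<open>finite N\<close> \<open>j \<in> N\<close>])
    finally show ?thesis
      by (simp add: rest_def sum.distrib)
  qed
  have "a j \<in> A j"
    using a \<open>j \<in> N\<close> by auto
  then show ?thesis
    using max_welfare[OF fun_upd_in_PiE_same[OF a \<open>j \<in> N\<close> \<open>c \<in> A j\<close>]]
      welfare_upd[OF \<open>c \<in> A j\<close>] welfare_upd[of "a j"] by simp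
qed

lemma separable_summand_bdd_above:
  fixes u :: "nat \<Rightarrow> (nat \<Rightarrow> 'a::topological_space) \<Rightarrow> real"
    and h :: "nat \<Rightarrow> nat \<Rightarrow> 'a \<Rightarrow> real"
  assumes "finite N" "i \<in> N" "j \<in> N" "compact (A j)"
    and cont: "continuous_on (\<Pi>\<^sub>E k\<in>N. A k) (u i)"
    and separable: "\<forall>x\<in>(\<Pi>\<^sub>E k\<in>N. A k). \<forall>i\<in>N. u i x = (\<Sum>j\<in>N. h i j (x j))"
    and a: "a \<in> (\<Pi>\<^sub>E k\<in>N. A k)"
  shows "bdd_above (h i j ` A j)"
proof -
  define rest where "rest = (\<Sum>k\<in>N - {j}. h i k (a k))"
  have h_eq: "h i j c = u i (a(j := c)) - rest" if "c \<in> A j" for c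
    using separable fun_upd_in_PiE_same[OF a \<open>j \<in> N\<close> that] \<open>i \<in> N\<close>
      sum_fun_upd_split[OF \<open>finite N\<close> \<open>j \<in> N\<close>, of "h i"] by (simp add: rest_def)
  have "continuous_on (A j) (\<lambda>c. a(j := c))"
  proof (rule continuous_on_coordinatewise_then_product)
    show "continuous_on (A j) (\<lambda>c. (a(j := c)) k)" for k
      by (cases "k = j") (simp_all add: continuous_on_id continuous_on_const)
  qed
  then have "continuous_on (A j) (\<lambda>c. u i (a(j := c)))"
    using fun_upd_in_PiE_same[OF a \<open>j \<in> N\<close>] by (intro continuous_on_compose2[OF cont]) auto
  then have "continuous_on (A j) (\<lambda>c. u i (a(j := c)) - rest)"
    by (intro continuous_on_diff continuous_on_const)
  then have "compact ((\<lambda>c. u i (a(j := c)) - rest) ` A j)"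
    using \<open>compact (A j)\<close> by (rule compact_continuous_image)
  moreover have "h i j ` A j = (\<lambda>c. u i (a(j := c)) - rest) ` A j"
    using h_eq by (rule image_cong[OF refl])
  ultimately show ?thesis
    by (simp add: bounded_imp_bdd_above compact_imp_bounded)
qed

theorem theorem1:
  fixes n :: nat
    and A :: "nat \<Rightarrow> 'a::euclidean_space set"
    and u :: "nat \<Rightarrow> (nat \<Rightarrow> 'a) \<Rightarrow> real"
    and h :: "nat \<Rightarrow> nat \<Rightarrow> 'a \<Rightarrow> real"
  defines "N \<equiv> {1..n}"
  defines "B \<equiv> (\<lambda>j. {b \<in> A j. \<forall>c\<in>A j. h j j c \<le> h j j b})"
  assumes compact: "\<forall>i\<in>N. compact (A i)"
    and cont: "\<forall>i\<in>N. continuous_on (\<Pi>\<^sub>E k\<in>N. A k) (u i)"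
    and separable: "\<forall>a\<in>(\<Pi>\<^sub>E k\<in>N. A k). \<forall>i\<in>N. u i a = (\<Sum>j\<in>N. h i j (a j))"
    and soc_opt: "\<exists>a. is_nash N A u a \<and> ereal (\<Sum>i\<in>N. u i a) = vbar N A u N"
    and cond1: "\<forall>S. S \<subseteq> N \<longrightarrow> (\<forall>j\<in>N.
        (SUP c\<in>A j. (\<Sum>i\<in>S. h i j c)) = (\<Sum>i\<in>S. SUP c\<in>A j. h i j c))"
    and cond2: "\<forall>S. S \<subseteq> N \<longrightarrow> (\<forall>j\<in>N.
        (SUP c\<in>B j. (\<Sum>i\<in>S. h i j c)) = (\<Sum>i\<in>S. SUP c\<in>B j. h i j c))"
  shows "lambda_core N A u \<noteq> {}"
proof -
  have "finite N" unfolding N_def by simp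
  obtain a where "is_nash N A u a" and welfare: "ereal (\<Sum>i\<in>N. u i a) = vbar N A u N"
    using soc_opt by blast
  then have a: "a \<in> (\<Pi>\<^sub>E k\<in>N. A k)"
    unfolding is_nash_def by blast
  have summand_max: "h i j c \<le> h i j (a j)" if "i \<in> N" "j \<in> N" "c \<in> A j" for i j c
  proof (rule maximizer_of_sum_maximizes_summands[OF \<open>finite N\<close> _ _ _ _ that(1,3)])
    show "a j \<in> A j" using a \<open>j \<in> N\<close> by auto
    show "bdd_above (h k j ` A j)" if "k \<in> N" for k
      using compact cont \<open>j \<in> N\<close> that
      by (intro separable_summand_bdd_above[OF \<open>finite N\<close> that \<open>j \<in> N\<close> _ _ separable a]) auto
    show "(\<Sum>k\<in>N. h k j d) \<le> (\<Sum>k\<in>N. h k j (a j))" if "d \<in> A j" for d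
      using separable_welfare_maximizer_coordinatewise[OF \<open>finite N\<close> separable a _ \<open>j \<in> N\<close> that]
        welfare_le_vbar_grand_coalition[OF welfare] by blast
    show "(SUP c\<in>A j. \<Sum>k\<in>N. h k j c) = (\<Sum>k\<in>N. SUP c\<in>A j. h k j c)"
      using cond1 \<open>j \<in> N\<close> by blast
  qed
  have "u i x \<le> u i a" if "i \<in> N" "x \<in> (\<Pi>\<^sub>E k\<in>N. A k)" for i x
    using separable that a by (auto intro!: sum_mono summand_max simp: PiE_iff)
  then have "a \<in> lambda_core N A u"
    using lambda_core_memberI[OF a welfare] by blast
  then show ?thesis by blast
qed

end
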